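(* Let $1\le s\le d$. Natural data $\bar x$ is uniform on $\{-1,1\}^d$; an augmentation $x\sim\mathcal{A}(\bar x)$ multiplies coordinate $j$ of $\bar x$ by an independent $\tau_j\sim\mathrm{Unif}[\tfrac12,1]$ for $j=s+1,\dots,d$ and keeps the first $s$ coordinates. Let $p_{\mathrm{data}}$ be the distribution of $x$ and $p_{\mathrm{pos}}$ the distribution of $(x,x^+)$, two independent augmentations of a common $\bar x$. The downstream task is $m$-way classification with label $y:\mathcal{X}\to[m]$ such that $y(x)=y(x')$ whenever $x_{1:s}=x'_{1:s}$. For $\lambda>0$ let $\mathcal{L}_\lambda(f)=\mathbb{E}_{(x,x^+)\sim p_{\mathrm{pos}}}[\|f(x)-f(x^+)\|_2^2]+\lambda\|\mathbb{E}_{x\sim p_{\mathrm{data}}}[f(x)f(x)^\top]-\mathbb{I}\|_F^2$. (1) Let $k=2^s$ and $\mathcal{F}_{\mathrm{ReLU}}=\{x\mapsto\sigma(Ux+b):U\in\mathbb{R}^{k\times d},b\in\mathbb{R}^k\}$ with $\sigma$ the entrywise ReLU. Let $\lambda>0$ and $\hat f\in\arg\min_{f\in\mathcal{F}_{\mathrm{ReLU}}}\mathcal{L}_\lambda(f)$. Then there exists $W\in\mathbb{R}^{m\times k}$ with $\mathbb{E}_{x\sim p_{\mathrm{data}}}[\|W\hat f(x)-e_{y(x)}\|_2^2]=0$. (2) Let $\mathcal{F}_{\mathrm{uni}}$ be the class of all functions $\mathbb{R}^d\to\mathbb{R}^k$. If $k\le2^{d-s}$, there exists $\hat f'\in\arg\min_{f\in\mathcal{F}_{\mathrm{uni}}}\mathcal{L}_\lambda(f)$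 such that every $W\in\mathbb{R}^{m\times k}$ satisfies $\mathbb{E}_{x\sim p_{\mathrm{data}}}[\|W\hat f'(x)-e_{y(x)}\|_2^2]\ge\frac12$.
   Context: $e_j\in\mathbb{R}^m$ denotes the $j$-th standard basis vector. *)

theory Defs
  imports "HOL-Probability.Probability"
begin

text \<open>Vectors in R^n are represented as functions nat \<Rightarrow> real, coordinates 0..n-1
  (coordinate j+1 of the paper is index j here); unused coordinates are irrelevant/zero.\<close>

definition cube :: "nat \<Rightarrow> (nat \<Rightarrow> real) set" where
  "cube d = {xb. (\<forall>j<d. xb j = -1 \<or> xb j = 1) \<and> (\<forall>j\<ge>d. xb j = 0)}"

definition tau_measure :: "nat \<Rightarrow> nat \<Rightarrow> (nat \<Rightarrow> real) measure" where
  "tau_measure s d = PiM {s..<d} (\<lambda>_. uniform_measure lborel {1/2..1::real})"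

definition aug :: "nat \<Rightarrow> nat \<Rightarrow> (nat \<Rightarrow> real) \<Rightarrow> (nat \<Rightarrow> real) \<Rightarrow> (nat \<Rightarrow> real)" where
  "aug s d xb \<tau> = (\<lambda>j. if j < s then xb j else if j < d then \<tau> j * xb j else 0)"

definition E_data :: "nat \<Rightarrow> nat \<Rightarrow> ((nat \<Rightarrow> real) \<Rightarrow> real) \<Rightarrow> real" where
  "E_data s d g = (\<Sum>xb\<in>cube d. \<integral>\<tau>. g (aug s d xb \<tau>) \<partial>tau_measure s d) / 2 ^ d"

definition E_pos :: "nat \<Rightarrow> nat \<Rightarrow> ((nat \<Rightarrow> real) \<Rightarrow> (nat \<Rightarrow> real) \<Rightarrow> real) \<Rightarrow> real" where
  "E_pos s d h = (\<Sum>xb\<in>cube d. \<integral>\<tau>. (\<integral>\<tau>'. h (aug s d xb \<tau>) (aug s d xb \<tau>') \<partial>tau_measure s d)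
       \<partial>tau_measure s d) / 2 ^ d"

definition loss :: "nat \<Rightarrow> nat \<Rightarrow> nat \<Rightarrow> real \<Rightarrow> ((nat \<Rightarrow> real) \<Rightarrow> (nat \<Rightarrow> real)) \<Rightarrow> real" where
  "loss s d k lam f =
     E_pos s d (\<lambda>x x'. \<Sum>i<k. (f x i - f x' i)^2)
     + lam * (\<Sum>i<k. \<Sum>j<k. (E_data s d (\<lambda>x. f x i * f x j) - (if i = j then 1 else 0))^2)"

text \<open>Functions R^d \<rightarrow> R^k for which the loss is well-defined: measurable with finite
  second moments under p_data.\<close>
definition admissible :: "nat \<Rightarrow> nat \<Rightarrow> nat \<Rightarrow> ((nat \<Rightarrow> real) \<Rightarrow> (nat \<Rightarrow> real)) \<Rightarrow> bool" where
  "admissible s d k f \<longleftrightarrow> (\<forall>xb\<in>cube d. \<forall>i<k.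
      (\<lambda>\<tau>. f (aug s d xb \<tau>) i) \<in> borel_measurable (tau_measure s d) \<and>
      integrable (tau_measure s d) (\<lambda>\<tau>. (f (aug s d xb \<tau>) i)^2))"

definition relu_net :: "nat \<Rightarrow> nat \<Rightarrow> (nat \<Rightarrow> nat \<Rightarrow> real) \<Rightarrow> (nat \<Rightarrow> real) \<Rightarrow> (nat \<Rightarrow> real) \<Rightarrow> (nat \<Rightarrow> real)" where
  "relu_net d k U b = (\<lambda>x i. if i < k then max 0 ((\<Sum>j<d. U i j * x j) + b i) else 0)"

definition F_relu :: "nat \<Rightarrow> nat \<Rightarrow> ((nat \<Rightarrow> real) \<Rightarrow> (nat \<Rightarrow> real)) set" where
  "F_relu d k = {relu_net d k U b | U b. True}"

definition down_err :: "nat \<Rightarrow> nat \<Rightarrow> nat \<Rightarrow> nat \<Rightarrow> ((nat \<Rightarrow> real) \<Rightarrow> nat) \<Rightarrow>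
    (nat \<Rightarrow> nat \<Rightarrow> real) \<Rightarrow> ((nat \<Rightarrow> real) \<Rightarrow> (nat \<Rightarrow> real)) \<Rightarrow> real" where
  "down_err s d k m y W f =
     E_data s d (\<lambda>x. \<Sum>i<m. ((\<Sum>j<k. W i j * f x j) - (if i = y x then 1 else 0))^2)"

end

theory Submission
  imports Defs
begin

(*
  The loss vanishes exactly when every feature is almost surely constant on the augmentation
  fibre of each cube point and these constants, as vectors indexed by the 2^d cube points, are
  orthogonal of squared norm 2^d.

  (1) Suitably scaled indicators of the 2^s prefixes x_{1:s} are ReLU features of zero loss, so a
  minimiser in F_relu has zero loss. Where the constant value of a feature on a fibre is positive,
  the ReLU acts as the identity and the feature is an affine function of the factors tau_j; being
  a.s. constant on [1/2,1]^{d-s}, it does not depend on them, i.e. its weights on the last d - s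
  coordinates vanish. Every feature is positive somewhere, so all features depend on the prefix
  only. Nonnegative orthogonal features have disjoint supports, so the 2^s nonzero features on
  the 2^s prefixes are, up to order and scaling, the indicators of single prefixes, and a linear
  probe reads off the label, which also depends on the prefix only.

  (2) The indicators sqrt(2^d) [x = beta_i] of k distinct cube points also have zero loss, since
  augmentation preserves signs, but they vanish on the remaining 2^d - k >= 2^(d-1) points,
  where every probe outputs 0 and misses the one-hot label by 1.
*)

section \<open>The augmentation measure\<close>

interpretation tau: prob_space "tau_measure s d" for s d
  unfolding tau_measure_def by (intro prob_space_PiM prob_space_uniform_measure) auto

lemma measurable_aug [measurable]: "(\<lambda>\<tau>. aug s d x \<tau> j) \<in> borel_measurable (tau_measure s d)"
proof (cases "j \<in> {s..<d}")
  case True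
  then have "(\<lambda>\<tau>. aug s d x \<tau> j) = (\<lambda>\<tau>. \<tau> j * x j)" by (auto simp: aug_def)
  with True show ?thesis unfolding tau_measure_def by simp
qed (cases "j < s"; simp add: aug_def)

lemma AE_tau_measure_box: "AE \<tau> in tau_measure s d. \<forall>j\<in>{s..<d}. \<tau> j \<in> {1/2..1}"
proof (rule AE_finite_allI)
  fix j assume "j \<in> {s..<d}"
  moreover have "AE t in uniform_measure lborel {1/2..1::real}. t \<in> {1/2..1}"
    by (rule AE_uniform_measureI) auto
  ultimately show "AE \<tau> in tau_measure s d. \<tau> j \<in> {1/2..1}"
    unfolding tau_measure_def
    by (intro AE_PiM_component) (auto intro: prob_space_uniform_measure)
qed simp

lemma AE_tau_measure_exists_near:
  assumes AE: "AE \<tau> in tau_measure s d. P \<tau>"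
    and p: "\<forall>l\<in>{s..<d}. p l \<in> {5/8..7/8}" and \<epsilon>: "0 < \<epsilon>" "\<epsilon> \<le> 1/8"
  shows "\<exists>\<tau>. P \<tau> \<and> (\<forall>l\<in>{s..<d}. \<bar>\<tau> l - p l\<bar> \<le> \<epsilon>)"
proof (rule ccontr)
  assume none: "\<not> ?thesis"
  define B where "B = PiE {s..<d} (\<lambda>l. {p l - \<epsilon> .. p l + \<epsilon>})"
  interpret unif: prob_space "uniform_measure lborel {1/2..1::real}"
    by (rule prob_space_uniform_measure) auto
  interpret product_sigma_finite "\<lambda>_. uniform_measure lborel {1/2..1::real}"
    by standard
  have "emeasure (uniform_measure lborel {1/2..1}) {p l - \<epsilon> .. p l + \<epsilon>} \<noteq> 0"
    if "l \<in> {s..<d}" for l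
  proof -
    have "p l \<in> {5/8..7/8}" using p that by blast
    then have "{1/2..1::real} \<inter> {p l - \<epsilon> .. p l + \<epsilon>} = {p l - \<epsilon> .. p l + \<epsilon>}"
      using \<epsilon> by (intro Int_absorb1) auto
    then show ?thesis using \<epsilon> by simp
  qed
  then have B_pos: "emeasure (tau_measure s d) B \<noteq> 0"
    unfolding tau_measure_def B_def by (subst emeasure_PiM) auto
  from AE obtain N where N: "{\<tau> \<in> space (tau_measure s d). \<not> P \<tau>} \<subseteq> N"
    "N \<in> sets (tau_measure s d)" "emeasure (tau_measure s d) N = 0"
    by (auto elim: AE_E)
  have "B \<subseteq> N"
    using N(1) none unfolding B_def tau_measure_def by (force simp: space_PiM PiE_iff abs_le_iff)
  then show False using B_pos N(2,3) by (metis emeasure_mono le_zero_eq)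
qed

lemma AE_tau_measure_affine_eq:
  fixes a p :: "nat \<Rightarrow> real"
  assumes AE: "AE \<tau> in tau_measure s d. c + (\<Sum>l\<in>{s..<d}. a l * \<tau> l) = v"
    and p: "\<forall>l\<in>{s..<d}. p l \<in> {5/8..7/8}"
  shows "c + (\<Sum>l\<in>{s..<d}. a l * p l) = v"
proof (rule ccontr)
  define L where "L \<tau> = c + (\<Sum>l\<in>{s..<d}. a l * \<tau> l)" for \<tau> :: "nat \<Rightarrow> real"
  define A where "A = (\<Sum>l\<in>{s..<d}. \<bar>a l\<bar>) + 1"
  assume "c + (\<Sum>l\<in>{s..<d}. a l * p l) \<noteq> v"
  then have gap: "\<bar>L p - v\<bar> > 0" unfolding L_def by simp
  have A: "A \<ge> 1" unfolding A_def by (simp add: sum_nonneg)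
  define \<epsilon> where "\<epsilon> = min (1/8) (\<bar>L p - v\<bar> / (2 * A))"
  have \<epsilon>: "0 < \<epsilon>" "\<epsilon> \<le> 1/8" using gap A unfolding \<epsilon>_def by auto
  obtain \<tau> where "L \<tau> = v" and near: "\<forall>l\<in>{s..<d}. \<bar>\<tau> l - p l\<bar> \<le> \<epsilon>"
    using AE_tau_measure_exists_near[OF AE p \<epsilon>] unfolding L_def by blast
  have "L \<tau> - L p = (\<Sum>l\<in>{s..<d}. a l * (\<tau> l - p l))"
    unfolding L_def by (simp add: sum_subtractf[symmetric] algebra_simps)
  then have "\<bar>L p - v\<bar> = \<bar>\<Sum>l\<in>{s..<d}. a l * (\<tau> l - p l)\<bar>"
    using \<open>L \<tau> = v\<close> by (simp add: abs_minus_commute)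
  also have "\<dots> \<le> (\<Sum>l\<in>{s..<d}. \<bar>a l\<bar> * \<epsilon>)"
    using near by (intro order.trans[OF sum_abs] sum_mono) (auto simp: abs_mult mult_left_mono)
  also have "\<dots> \<le> A * \<epsilon>"
    unfolding A_def using \<epsilon> by (simp add: sum_distrib_right[symmetric])
  also have "\<dots> \<le> A * (\<bar>L p - v\<bar> / (2 * A))"
    using A by (intro mult_left_mono) (auto simp: \<epsilon>_def)
  also have "\<dots> = \<bar>L p - v\<bar> / 2"
    using A by simp
  finally show False using gap by simp
qed

lemma AE_tau_measure_affine_eq_imp_coeff_eq_0:
  fixes a :: "nat \<Rightarrow> real"
  assumes AE: "AE \<tau> in tau_measure s d. c + (\<Sum>l\<in>{s..<d}. a l * \<tau> l) = v"
    and j: "j \<in> {s..<d}"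
  shows "a j = 0"
proof -
  define p :: "nat \<Rightarrow> real" where "p = (\<lambda>_. 3/4)"
  have "c + (\<Sum>l\<in>{s..<d}. a l * p l) = v" "c + (\<Sum>l\<in>{s..<d}. a l * (p(j := 7/8)) l) = v"
    by (rule AE_tau_measure_affine_eq[OF AE]; auto simp: p_def)+
  moreover have "(\<Sum>l\<in>{s..<d}. a l * (p(j := 7/8)) l) = (\<Sum>l\<in>{s..<d}. a l * p l) + a j / 8"
    using j by (simp add: sum.remove p_def)
  ultimately show ?thesis by simp
qed

section \<open>The hypercube and its augmentations\<close>

lemma cube_eq_image:
  "cube n = (\<lambda>S j. if j < n then if j \<in> S then 1 else -1 else 0) ` Pow {..<n}"
  (is "_ = ?h ` _")
proof
  show "cube n \<subseteq> ?h ` Pow {..<n}"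
  proof
    fix x assume "x \<in> cube n"
    then have "x = ?h {j. j < n \<and> x j = 1}" unfolding cube_def by (auto intro!: ext)
    then show "x \<in> ?h ` Pow {..<n}" by blast
  qed
qed (auto simp: cube_def)

lemma finite_cube [simp]: "finite (cube n)"
  by (simp add: cube_eq_image)

lemma card_cube: "card (cube n) = 2 ^ n"
proof -
  have "inj_on (\<lambda>S j. if j < n then if j \<in> S then 1 else -1 else 0 :: real) (Pow {..<n})"
    by (rule inj_onI) (auto simp: fun_eq_iff split: if_splits)
  then show ?thesis by (simp add: cube_eq_image card_image card_Pow)
qed

lemma cube_eqI: "p \<in> cube s \<Longrightarrow> q \<in> cube s \<Longrightarrow> \<forall>j<s. p j = q j \<Longrightarrow> p = q"
  unfolding cube_def by (auto intro!: ext) (metis not_le)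

lemma cube_prefix_exists: "x \<in> cube d \<Longrightarrow> s \<le> d \<Longrightarrow> \<exists>p\<in>cube s. \<forall>j<s. p j = x j"
  by (rule bexI[of _ "\<lambda>j. if j < s then x j else 0"]) (auto simp: cube_def)

lemma cube_extension_exists: "p \<in> cube s \<Longrightarrow> s \<le> d \<Longrightarrow> \<exists>x\<in>cube d. \<forall>j<s. x j = p j"
  by (rule bexI[of _ "\<lambda>j. if j < s then p j else if j < d then 1 else 0"]) (auto simp: cube_def)

lemma aug_prefix [simp]: "j < s \<Longrightarrow> aug s d x \<tau> j = x j"
  by (simp add: aug_def)

lemma sgn_aug:
  assumes "x \<in> cube d" and "\<forall>j\<in>{s..<d}. \<tau> j \<in> {1/2..1}"
  shows "sgn (aug s d x \<tau> j) = x j"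
proof (cases "j \<in> {s..<d}")
  case True
  then have "\<tau> j \<in> {1/2..1}" "x j = -1 \<or> x j = 1" using assms unfolding cube_def by auto
  with True show ?thesis by (auto simp: aug_def sgn_mult)
qed (use assms(1) in \<open>cases "j < d"; auto simp: aug_def cube_def\<close>)

lemma abs_aug_le_1:
  assumes "x \<in> cube d" and "\<forall>j\<in>{s..<d}. \<tau> j \<in> {1/2..1}"
  shows "\<bar>aug s d x \<tau> j\<bar> \<le> 1"
proof (cases "j \<in> {s..<d}")
  case True
  then have "\<tau> j \<in> {1/2..1}" "x j = -1 \<or> x j = 1" using assms unfolding cube_def by auto
  with True show ?thesis by (auto simp: aug_def)
qed (use assms(1) in \<open>cases "j < d"; auto simp: aug_def cube_def\<close>)

section \<open>Features of vanishing loss\<close>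

lemma (in prob_space) integral_sq_dist_const:
  fixes X :: "'a \<Rightarrow> real"
  assumes [simp]: "integrable M X" "integrable M (\<lambda>x. (X x)^2)"
  shows "(\<integral>y. (a - X y)^2 \<partial>M) = (a - expectation X)^2 + variance X"
proof -
  have "(\<integral>y. (a - X y)^2 \<partial>M) = (\<integral>y. a^2 - 2 * a * X y + (X y)^2 \<partial>M)"
    by (simp add: power2_diff)
  also have "\<dots> = a^2 - 2 * a * expectation X + expectation (\<lambda>y. (X y)^2)"
    by (simp add: prob_space)
  finally show ?thesis
    unfolding variance_eq[OF assms] by (simp add: power2_diff)
qed

lemma (in prob_space) integrable_sq_dist_const:
  fixes X :: "'a \<Rightarrow> real"
  assumes "integrable M X" "integrable M (\<lambda>x. (X x)^2)"
  shows "integrable M (\<lambda>x. (X x - a)^2)"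
  using assms by (simp add: power2_diff)

lemma (in prob_space) integral_integral_sum_sq_dist:
  fixes F :: "'i \<Rightarrow> 'a \<Rightarrow> real"
  assumes int: "\<And>i. i \<in> I \<Longrightarrow> integrable M (F i)"
      "\<And>i. i \<in> I \<Longrightarrow> integrable M (\<lambda>x. (F i x)^2)"
  shows "(\<integral>x. (\<integral>y. (\<Sum>i\<in>I. (F i x - F i y)^2) \<partial>M) \<partial>M) = 2 * (\<Sum>i\<in>I. variance (F i))"
proof -
  have int_dist: "integrable M (\<lambda>y. (F i y - a)^2)" if "i \<in> I" for i a
    using int(1)[OF that] int(2)[OF that] by (rule integrable_sq_dist_const)
  have "(\<integral>y. (\<Sum>i\<in>I. (F i x - F i y)^2) \<partial>M) = (\<Sum>i\<in>I. (\<integral>y. (F i x - F i y)^2 \<partial>M))" for x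
    using int_dist by (intro Bochner_Integration.integral_sum) (simp add: power2_commute[of "F _ x"])
  also have "\<dots> x = (\<Sum>i\<in>I. (F i x - expectation (F i))^2 + variance (F i))" for x
    using int by (intro sum.cong) (simp_all add: integral_sq_dist_const)
  finally have "(\<integral>y. (\<Sum>i\<in>I. (F i x - F i y)^2) \<partial>M)
      = (\<Sum>i\<in>I. (F i x - expectation (F i))^2 + variance (F i))" for x .
  then have "(\<integral>x. (\<integral>y. (\<Sum>i\<in>I. (F i x - F i y)^2) \<partial>M) \<partial>M)
      = (\<Sum>i\<in>I. (\<integral>x. (F i x - expectation (F i))^2 + variance (F i) \<partial>M))"
    using int_dist by (simp add: Bochner_Integration.integral_sum)
  also have "\<dots> = (\<Sum>i\<in>I. 2 * variance (F i))"
    using int_dist by (intro sum.cong) (simp_all add: prob_space)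
  finally show ?thesis by (simp add: sum_distrib_left)
qed

lemma (in prob_space) variance_eq_0_imp_AE_eq_expectation:
  fixes X :: "'a \<Rightarrow> real"
  assumes "integrable M X" "integrable M (\<lambda>x. (X x)^2)" and "variance X = 0"
  shows "AE x in M. X x = expectation X"
proof -
  have "AE x in M. (X x - expectation X)^2 = 0"
    using assms integral_nonneg_eq_0_iff_AE[OF integrable_sq_dist_const] by simp
  then show ?thesis by eventually_elim simp
qed

lemma E_pos_nonneg: "(\<And>x x'. h x x' \<ge> 0) \<Longrightarrow> E_pos s d h \<ge> 0"
  unfolding E_pos_def by (intro divide_nonneg_pos sum_nonneg integral_nonneg) auto

lemma loss_nonneg: "lam \<ge> 0 \<Longrightarrow> loss s d k lam f \<ge> 0"
  unfolding loss_def by (intro add_nonneg_nonneg E_pos_nonneg mult_nonneg_nonneg sum_nonneg) auto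

lemma loss_eq_0_iff:
  assumes "lam > 0"
  shows "loss s d k lam f = 0 \<longleftrightarrow> E_pos s d (\<lambda>x x'. \<Sum>i<k. (f x i - f x' i)^2) = 0 \<and>
    (\<forall>i<k. \<forall>j<k. E_data s d (\<lambda>x. f x i * f x j) = (if i = j then 1 else 0))"
proof -
  define gram where "gram = (\<Sum>i<k. \<Sum>j<k. (E_data s d (\<lambda>x. f x i * f x j) - (if i = j then 1 else 0))^2)"
  have "E_pos s d (\<lambda>x x'. \<Sum>i<k. (f x i - f x' i)^2) \<ge> 0" "lam * gram \<ge> 0"
    unfolding gram_def using assms by (auto intro!: E_pos_nonneg sum_nonneg mult_nonneg_nonneg)
  then have "loss s d k lam f = 0 \<longleftrightarrow> E_pos s d (\<lambda>x x'. \<Sum>i<k. (f x i - f x' i)^2) = 0 \<and> gram = 0"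
    unfolding loss_def gram_def[symmetric] using assms by (simp add: add_nonneg_eq_0_iff)
  also have "gram = 0 \<longleftrightarrow> (\<forall>i<k. \<forall>j<k. E_data s d (\<lambda>x. f x i * f x j) = (if i = j then 1 else 0))"
    unfolding gram_def by (simp add: sum_nonneg_eq_0_iff sum_nonneg) blast
  finally show ?thesis .
qed

lemma E_data_cong_AE:
  assumes "\<And>x. x \<in> cube d \<Longrightarrow> (\<lambda>\<tau>. g (aug s d x \<tau>)) \<in> borel_measurable (tau_measure s d)"
    and "\<And>x. x \<in> cube d \<Longrightarrow> AE \<tau> in tau_measure s d. g (aug s d x \<tau>) = c x"
  shows "E_data s d g = (\<Sum>x\<in>cube d. c x) / 2 ^ d"
proof -
  have "(\<integral>\<tau>. g (aug s d x \<tau>) \<partial>tau_measure s d) = c x" if "x \<in> cube d" for x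
    using integral_cong_AE[OF assms(1)[OF that] _ assms(2)[OF that]] by (simp add: tau.prob_space)
  then show ?thesis unfolding E_data_def by simp
qed

lemma E_data_prefix_invariant:
  assumes "\<And>x x'. \<forall>j<s. x j = x' j \<Longrightarrow> g x = g x'"
  shows "E_data s d g = (\<Sum>x\<in>cube d. g x) / 2 ^ d"
proof -
  have "g (aug s d x \<tau>) = g x" for x \<tau> by (rule assms) simp
  then show ?thesis unfolding E_data_def by (simp add: tau.prob_space)
qed

lemma E_pos_sq_dist_eq_0:
  assumes "\<And>x. x \<in> cube d \<Longrightarrow> AE \<tau> in tau_measure s d. \<forall>i<k. f (aug s d x \<tau>) i = G x i"
  shows "E_pos s d (\<lambda>x x'. \<Sum>i<k. (f x i - f x' i)^2) = 0"
proof -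
  have "(\<integral>\<tau>. (\<integral>\<tau>'. (\<Sum>i<k. (f (aug s d x \<tau>) i - f (aug s d x \<tau>') i)^2) \<partial>tau_measure s d)
      \<partial>tau_measure s d) = 0" if "x \<in> cube d" for x
  proof (rule integral_eq_zero_AE)
    show "AE \<tau> in tau_measure s d. (\<integral>\<tau>'. (\<Sum>i<k. (f (aug s d x \<tau>) i - f (aug s d x \<tau>') i)^2)
        \<partial>tau_measure s d) = 0"
      using assms[OF that]
    proof eventually_elim
      case (elim \<tau>)
      show ?case
      proof (rule integral_eq_zero_AE)
        show "AE \<tau>' in tau_measure s d. (\<Sum>i<k. (f (aug s d x \<tau>) i - f (aug s d x \<tau>') i)^2) = 0"
          using assms[OF \<open>x \<in> cube d\<close>] by eventually_elim (use elim in simp)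
      qed
    qed
  qed
  then show ?thesis unfolding E_pos_def by simp
qed

lemma admissible_E_pos_eq_0_imp_AE_eq_mean:
  assumes adm: "admissible s d k f"
    and E0: "E_pos s d (\<lambda>x x'. \<Sum>i<k. (f x i - f x' i)^2) = 0"
    and x: "x \<in> cube d" and i: "i < k"
  shows "AE \<tau> in tau_measure s d. f (aug s d x \<tau>) i = (\<integral>\<tau>. f (aug s d x \<tau>) i \<partial>tau_measure s d)"
proof -
  define F where "F x i \<tau> = f (aug s d x \<tau>) i" for x i \<tau>
  have int: "integrable (tau_measure s d) (F x i)" "integrable (tau_measure s d) (\<lambda>\<tau>. (F x i \<tau>)^2)"
    if "x \<in> cube d" "i < k" for x i
    using adm that unfolding admissible_def F_def by (auto intro: tau.square_integrable_imp_integrable)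
  have "(\<integral>\<tau>. (\<integral>\<tau>'. (\<Sum>i<k. (f (aug s d x \<tau>) i - f (aug s d x \<tau>') i)^2) \<partial>tau_measure s d)
      \<partial>tau_measure s d) = 2 * (\<Sum>i<k. tau.variance s d (F x i))" if "x \<in> cube d" for x
    using tau.integral_integral_sum_sq_dist[where I="{..<k}" and F="F x"] int that unfolding F_def by simp
  with E0 have "(\<Sum>x\<in>cube d. 2 * (\<Sum>i<k. tau.variance s d (F x i))) = 0"
    unfolding E_pos_def by simp
  with x have "(\<Sum>i<k. tau.variance s d (F x i)) = 0"
    by (subst (asm) sum_nonneg_eq_0_iff) (auto intro: sum_nonneg tau.variance_positive)
  with i have "tau.variance s d (F x i) = 0"
    by (subst (asm) sum_nonneg_eq_0_iff) (auto intro: tau.variance_positive)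
  with int x i show ?thesis
    using tau.variance_eq_0_imp_AE_eq_expectation unfolding F_def by blast
qed

lemma loss_eq_0_if_AE_determined:
  assumes meas: "\<And>x i. x \<in> cube d \<Longrightarrow> i < k \<Longrightarrow>
      (\<lambda>\<tau>. f (aug s d x \<tau>) i) \<in> borel_measurable (tau_measure s d)"
    and AE: "\<And>x. x \<in> cube d \<Longrightarrow> AE \<tau> in tau_measure s d. \<forall>i<k. f (aug s d x \<tau>) i = G x i"
    and gram: "\<And>i j. i < k \<Longrightarrow> j < k \<Longrightarrow>
      (\<Sum>x\<in>cube d. G x i * G x j) = (if i = j then 2 ^ d else 0)"
  shows "loss s d k lam f = 0"
proof -
  have "E_data s d (\<lambda>x. f x i * f x j) = (if i = j then 1 else 0)" if ij: "i < k" "j < k" for i j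
  proof -
    have "E_data s d (\<lambda>x. f x i * f x j) = (\<Sum>x\<in>cube d. G x i * G x j) / 2 ^ d"
    proof (rule E_data_cong_AE)
      fix x assume x: "x \<in> cube d"
      show "(\<lambda>\<tau>. f (aug s d x \<tau>) i * f (aug s d x \<tau>) j) \<in> borel_measurable (tau_measure s d)"
        using meas[OF x ij(1)] meas[OF x ij(2)] by measurable
      show "AE \<tau> in tau_measure s d. f (aug s d x \<tau>) i * f (aug s d x \<tau>) j = G x i * G x j"
        using AE[OF x] by eventually_elim (use ij in auto)
    qed
    with gram[OF ij] show ?thesis by simp
  qed
  then show ?thesis
    using E_pos_sq_dist_eq_0[OF AE] unfolding loss_def by simp
qed

section \<open>One-layer ReLU networks\<close>

lemma relu_net_aug:
  assumes "s \<le> d" "i < k"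
  shows "relu_net d k U b (aug s d x \<tau>) i
    = max 0 ((\<Sum>j<s. U i j * x j) + b i + (\<Sum>j\<in>{s..<d}. U i j * x j * \<tau> j))"
proof -
  have "(\<Sum>j<d. g j) = (\<Sum>j<s. g j) + (\<Sum>j\<in>{s..<d}. g j)" for g :: "nat \<Rightarrow> real"
    using assms(1) by (simp add: lessThan_atLeast0 sum.atLeastLessThan_concat)
  then have "(\<Sum>j<d. U i j * aug s d x \<tau> j)
      = (\<Sum>j<s. U i j * aug s d x \<tau> j) + (\<Sum>j\<in>{s..<d}. U i j * aug s d x \<tau> j)" .
  also have "\<dots> = (\<Sum>j<s. U i j * x j) + (\<Sum>j\<in>{s..<d}. U i j * x j * \<tau> j)"
    by (intro arg_cong2[where f="(+)"] sum.cong) (auto simp: aug_def)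
  finally show ?thesis
    using assms(2) unfolding relu_net_def by (simp add: ac_simps)
qed

lemma admissible_relu_net: "admissible s d k (relu_net d k U b)"
  unfolding admissible_def
proof (intro ballI allI impI conjI)
  fix x i assume x: "x \<in> cube d" and "i < k"
  show meas: "(\<lambda>\<tau>. relu_net d k U b (aug s d x \<tau>) i) \<in> borel_measurable (tau_measure s d)"
    unfolding relu_net_def by measurable
  define B where "B = (\<Sum>j<d. \<bar>U i j\<bar>) + \<bar>b i\<bar>"
  have "AE \<tau> in tau_measure s d. \<bar>relu_net d k U b (aug s d x \<tau>) i\<bar> \<le> B"
    using AE_tau_measure_box
  proof eventually_elim
    case (elim \<tau>)
    have "\<bar>(\<Sum>j<d. U i j * aug s d x \<tau> j)\<bar> \<le> (\<Sum>j<d. \<bar>U i j\<bar>)"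
      using abs_aug_le_1[OF x elim]
      by (intro order.trans[OF sum_abs] sum_mono) (auto simp: abs_mult intro: mult_left_le)
    then show ?case unfolding relu_net_def B_def by auto
  qed
  then have "AE \<tau> in tau_measure s d. norm ((relu_net d k U b (aug s d x \<tau>) i)^2) \<le> B^2"
  proof eventually_elim
    case (elim \<tau>)
    then have "\<bar>relu_net d k U b (aug s d x \<tau>) i\<bar>^2 \<le> B^2" by (intro power_mono) auto
    then show ?case by simp
  qed
  with meas show "integrable (tau_measure s d) (\<lambda>\<tau>. (relu_net d k U b (aug s d x \<tau>) i)^2)"
    by (intro tau.integrable_const_bound) auto
qed

lemma relu_net_tail_weights_eq_0:
  assumes "s \<le> d" and x: "x \<in> cube d" and "i < k" and "v > 0"
    and AE: "AE \<tau> in tau_measure s d. relu_net d k U b (aug s d x \<tau>) i = v"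
  shows "\<forall>j\<in>{s..<d}. U i j = 0"
proof
  fix j assume j: "j \<in> {s..<d}"
  from AE have "AE \<tau> in tau_measure s d.
      (\<Sum>j<s. U i j * x j) + b i + (\<Sum>l\<in>{s..<d}. U i l * x l * \<tau> l) = v"
    by eventually_elim
      (use relu_net_aug[OF \<open>s \<le> d\<close> \<open>i < k\<close>] \<open>v > 0\<close> in \<open>auto simp: max_def split: if_splits\<close>)
  then have "U i j * x j = 0"
    by (rule AE_tau_measure_affine_eq_imp_coeff_eq_0[OF _ j])
  moreover have "x j \<noteq> 0" using x j unfolding cube_def by auto
  ultimately show "U i j = 0" by simp
qed

lemma relu_net_prefix_invariant:
  assumes "s \<le> d" and tail: "\<forall>i<k. \<forall>j\<in>{s..<d}. U i j = 0" and "\<forall>j<s. x j = x' j"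
  shows "relu_net d k U b x = relu_net d k U b x'"
proof -
  have "(\<Sum>j<d. U i j * x j) = (\<Sum>j<s. U i j * x j)" if "i < k" for i and x :: "nat \<Rightarrow> real"
    using \<open>s \<le> d\<close> tail that by (intro sum.mono_neutral_right) auto
  with assms(3) show ?thesis
    unfolding relu_net_def by (intro ext) simp
qed

lemma relu_prefix_indicator:
  assumes p: "p \<in> cube s" and x: "x \<in> cube d" and "s \<le> d" and "c > 0"
  shows "max 0 (c * ((\<Sum>j<s. p j * x j) - (real s - 1))) = (if \<forall>j<s. x j = p j then c else 0)"
proof -
  have pm1: "p j = -1 \<or> p j = 1" "x j = -1 \<or> x j = 1" if "j < s" for j
    using that p x \<open>s \<le> d\<close> unfolding cube_def by auto
  show ?thesis
  proof (cases "\<forall>j<s. x j = p j")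
    case True
    then have "(\<Sum>j<s. p j * x j) = (\<Sum>j<s. 1)"
      by (intro sum.cong) (use pm1 in force)+
    with True \<open>c > 0\<close> show ?thesis by simp
  next
    case False
    then obtain j0 where j0: "j0 < s" "x j0 \<noteq> p j0" by auto
    have "(\<Sum>j<s. p j * x j) = p j0 * x j0 + (\<Sum>j\<in>{..<s} - {j0}. p j * x j)"
      using j0(1) by (simp add: sum.remove)
    also have "\<dots> \<le> -1 + (\<Sum>j\<in>{..<s} - {j0}. 1)"
      using pm1 j0 by (intro add_mono sum_mono) force+
    finally have "(\<Sum>j<s. p j * x j) - (real s - 1) < 0" using j0(1) by simp
    with False \<open>c > 0\<close> show ?thesis by (simp add: mult_pos_neg)
  qed
qed

lemma ex_relu_net_loss_eq_0:
  assumes "s \<le> d"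
  shows "\<exists>f\<in>F_relu d (2 ^ s). loss s d (2 ^ s) lam f = 0"
proof -
  obtain p :: "nat \<Rightarrow> nat \<Rightarrow> real" where p: "bij_betw p {..<2 ^ s} (cube s)"
    using ex_bij_betw_nat_finite[OF finite_cube, of s] by (auto simp: card_cube lessThan_atLeast0)
  have p_cube: "p i \<in> cube s" if "i < 2 ^ s" for i
    using p that by (auto dest: bij_betwE)
  define S where "S i = {x \<in> cube d. \<forall>j<s. x j = p i j}" for i
  define c where "c i = sqrt (2 ^ d / card (S i))" for i
  have "S i \<noteq> {}" if "i < 2 ^ s" for i
    using cube_extension_exists[OF p_cube[OF that] \<open>s \<le> d\<close>] unfolding S_def by blast
  then have c_pos: "c i > 0" and c_sq: "c i * c i * card (S i) = 2 ^ d" if "i < 2 ^ s" for i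
    using that unfolding c_def S_def by (auto simp: card_gt_0_iff)
  define U where "U i j = c i * p i j" for i j
  define b where "b i = - c i * (real s - 1)" for i
  define G where "G x i = (if i < 2 ^ s \<and> x \<in> S i then c i else 0)" for x i
  have net: "relu_net d (2 ^ s) U b (aug s d x \<tau>) i = G x i" if x: "x \<in> cube d" for x \<tau> i
  proof (cases "i < 2 ^ s")
    case True
    have "p i j = 0" if "j \<ge> s" for j using p_cube[OF True] that unfolding cube_def by auto
    then have "relu_net d (2 ^ s) U b (aug s d x \<tau>) i = max 0 (c i * ((\<Sum>j<s. p i j * x j) - (real s - 1)))"
      unfolding relu_net_aug[OF \<open>s \<le> d\<close> True] U_def b_def
      by (simp add: sum_distrib_left algebra_simps)
    with True show ?thesis
      using relu_prefix_indicator[OF p_cube[OF True] x \<open>s \<le> d\<close> c_pos[OF True]] x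
      by (simp add: G_def S_def)
  qed (simp add: relu_net_def G_def)
  have "(\<Sum>x\<in>cube d. G x i * G x j) = (if i = j then 2 ^ d else 0)"
    if ij: "i < 2 ^ s" "j < 2 ^ s" for i j
  proof (cases "i = j")
    case True
    have "(\<Sum>x\<in>S i. c i * c i) = (\<Sum>x\<in>cube d. G x i * G x i)"
      using ij by (intro sum.mono_neutral_cong_left) (auto simp: S_def G_def)
    with True c_sq[OF ij(1)] show ?thesis by (simp add: mult.commute)
  next
    case False
    then have "p i \<noteq> p j" using p ij by (auto dest: bij_betw_imp_inj_on inj_onD)
    then have "S i \<inter> S j = {}"
      using cube_eqI[OF p_cube[OF ij(1)] p_cube[OF ij(2)]] unfolding S_def by auto
    then show ?thesis unfolding G_def using False by (auto intro!: sum.neutral)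
  qed
  then have "loss s d (2 ^ s) lam (relu_net d (2 ^ s) U b) = 0"
    using net by (intro loss_eq_0_if_AE_determined[where G=G]) (auto simp: relu_net_def)
  then show ?thesis unfolding F_relu_def by blast
qed

lemma relu_net_loss_eq_0_imp_prefix_invariant:
  assumes "s \<le> d" "lam > 0" and loss0: "loss s d k lam (relu_net d k U b) = 0"
    and "\<forall>j<s. x j = x' j"
  shows "relu_net d k U b x = relu_net d k U b x'"
proof -
  let ?f = "relu_net d k U b"
  from loss0 \<open>lam > 0\<close> have E0: "E_pos s d (\<lambda>x x'. \<Sum>i<k. (?f x i - ?f x' i)^2) = 0"
    and gram: "\<And>i. i < k \<Longrightarrow> E_data s d (\<lambda>x. ?f x i * ?f x i) = 1"
    by (auto simp: loss_eq_0_iff)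
  have "\<forall>j\<in>{s..<d}. U i j = 0" if i: "i < k" for i
  proof -
    define V where "V x = (\<integral>\<tau>. ?f (aug s d x \<tau>) i \<partial>tau_measure s d)" for x
    have AE: "AE \<tau> in tau_measure s d. ?f (aug s d x \<tau>) i = V x" if "x \<in> cube d" for x
      unfolding V_def by (rule admissible_E_pos_eq_0_imp_AE_eq_mean[OF admissible_relu_net E0 that i])
    have "\<exists>x\<in>cube d. V x \<noteq> 0"
    proof (rule ccontr)
      assume "\<not> ?thesis"
      then have "AE \<tau> in tau_measure s d. ?f (aug s d x \<tau>) i * ?f (aug s d x \<tau>) i = 0"
        if "x \<in> cube d" for x
        using AE[OF that] that by (auto elim!: eventually_mono)
      then have "E_data s d (\<lambda>x. ?f x i * ?f x i) = 0"
        unfolding E_data_def by (simp add: integral_eq_zero_AE)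
      with gram[OF i] show False by simp
    qed
    then obtain x where x: "x \<in> cube d" "V x \<noteq> 0" by blast
    moreover have "V x \<ge> 0" unfolding V_def relu_net_def by simp
    ultimately show ?thesis
      using relu_net_tail_weights_eq_0[OF \<open>s \<le> d\<close> x(1) i _ AE[OF x(1)]] by simp
  qed
  with \<open>s \<le> d\<close> \<open>\<forall>j<s. x j = x' j\<close> show ?thesis
    by (intro relu_net_prefix_invariant) auto
qed

lemma linear_probe_of_disjoint_supports:
  fixes F :: "'a \<Rightarrow> nat \<Rightarrow> real" and y :: "'a \<Rightarrow> nat"
  assumes "finite P" "card P = k"
    and nonzero: "\<And>i. i < k \<Longrightarrow> \<exists>p\<in>P. F p i \<noteq> 0"
    and disjoint: "\<And>p i j. p \<in> P \<Longrightarrow> i < k \<Longrightarrow> j < k \<Longrightarrow> i \<noteq> j \<Longrightarrow> F p i * F p j = 0"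
  shows "\<exists>W. \<forall>p\<in>P. \<forall>l. (\<Sum>j<k. W l j * F p j) = (if l = y p then 1 else 0)"
proof -
  obtain rep where rep: "\<And>i. i < k \<Longrightarrow> rep i \<in> P \<and> F (rep i) i \<noteq> 0"
    using nonzero by metis
  have "inj_on rep {..<k}"
    using rep disjoint by (intro inj_onI) (metis lessThan_iff mult_eq_0_iff)
  then have onto: "rep ` {..<k} = P"
    using rep assms(1,2) by (intro card_subset_eq) (auto simp: card_image)
  define W where "W l i = (if l = y (rep i) then 1 / F (rep i) i else 0)" for l i
  have "(\<Sum>j<k. W l j * F p j) = (if l = y p then 1 else 0)" if "p \<in> P" for p l
  proof -
    obtain i where i: "i < k" "p = rep i" using onto \<open>p \<in> P\<close> by auto
    have "F p j = 0" if "j < k" "j \<noteq> i" for j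
      using disjoint[of p i j] rep[of i] i that \<open>p \<in> P\<close> by auto
    then have "(\<Sum>j<k. W l j * F p j) = W l i * F p i"
      using i(1) by (subst sum.remove[of _ i]) (auto intro!: sum.neutral)
    then show ?thesis using rep[OF i(1)] i(2) by (simp add: W_def)
  qed
  then show ?thesis by blast
qed

lemma prefix_invariant_features_linear_probe:
  assumes "s \<le> d"
    and f_prefix: "\<And>x x'. \<forall>j<s. x j = x' j \<Longrightarrow> f x = f x'"
    and f_nonneg: "\<And>x i. f x i \<ge> 0"
    and gram: "\<And>i j. i < 2 ^ s \<Longrightarrow> j < 2 ^ s \<Longrightarrow>
      E_data s d (\<lambda>x. f x i * f x j) = (if i = j then 1 else 0)"
    and y_prefix: "\<And>x x'. \<forall>j<s. x j = x' j \<Longrightarrow> y x = y x'"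
  shows "\<exists>W. down_err s d (2 ^ s) m y W f = 0"
proof -
  have sum_gram: "(\<Sum>x\<in>cube d. f x i * f x j) = (if i = j then 2 ^ d else 0)"
    if "i < 2 ^ s" "j < 2 ^ s" for i j
  proof -
    have "E_data s d (\<lambda>x. f x i * f x j) = (\<Sum>x\<in>cube d. f x i * f x j) / 2 ^ d"
      by (rule E_data_prefix_invariant) (metis f_prefix)
    with gram[OF that] show ?thesis by (auto split: if_splits)
  qed
  have disjoint: "f p i * f p j = 0" if "p \<in> cube s" "i < 2 ^ s" "j < 2 ^ s" "i \<noteq> j" for p i j
  proof -
    obtain x where x: "x \<in> cube d" "\<forall>l<s. x l = p l"
      using cube_extension_exists[OF \<open>p \<in> cube s\<close> \<open>s \<le> d\<close>] by blast
    have "(\<Sum>x\<in>cube d. f x i * f x j) = 0"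
      using sum_gram[of i j] that by simp
    then have "f x i * f x j = 0"
      using f_nonneg x(1) by (simp add: sum_nonneg_eq_0_iff)
    with f_prefix[OF x(2)] show ?thesis by simp
  qed
  have nonzero: "\<exists>p\<in>cube s. f p i \<noteq> 0" if i: "i < 2 ^ s" for i
  proof -
    have "\<not> (\<forall>x\<in>cube d. f x i = 0)"
    proof
      assume "\<forall>x\<in>cube d. f x i = 0"
      then have "(\<Sum>x\<in>cube d. f x i * f x i) = 0" by simp
      with sum_gram[OF i i] show False by simp
    qed
    then obtain x where "x \<in> cube d" "f x i \<noteq> 0" by blast
    moreover obtain p where "p \<in> cube s" "\<forall>l<s. p l = x l"
      using cube_prefix_exists[OF \<open>x \<in> cube d\<close> \<open>s \<le> d\<close>] by blast
    moreover from this(2) have "f p = f x" by (rule f_prefix)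
    ultimately show ?thesis by (metis fun_cong)
  qed
  obtain W where W: "\<forall>p\<in>cube s. \<forall>l. (\<Sum>j<2 ^ s. W l j * f p j) = (if l = y p then 1 else 0)"
    using linear_probe_of_disjoint_supports[where P="cube s" and k="2 ^ s" and F=f and y=y]
      nonzero disjoint by (simp only: finite_cube card_cube) blast
  have "(\<Sum>l<m. ((\<Sum>j<2 ^ s. W l j * f x j) - (if l = y x then 1 else 0))^2) = 0"
    if x: "x \<in> cube d" for x
  proof -
    obtain p where "p \<in> cube s" "\<forall>j<s. p j = x j" using cube_prefix_exists[OF x \<open>s \<le> d\<close>] by blast
    moreover from this(2) have "f x = f p" "y x = y p" by (metis f_prefix, metis y_prefix)
    ultimately show ?thesis using W by simp
  qed
  moreover have "down_err s d (2 ^ s) m y W f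
      = (\<Sum>x\<in>cube d. \<Sum>l<m. ((\<Sum>j<2 ^ s. W l j * f x j) - (if l = y x then 1 else 0))^2) / 2 ^ d"
    unfolding down_err_def
  proof (rule E_data_prefix_invariant)
    fix x x' :: "nat \<Rightarrow> real" assume "\<forall>j<s. x j = x' j"
    then show "(\<Sum>l<m. ((\<Sum>j<2 ^ s. W l j * f x j) - (if l = y x then 1 else 0))^2)
      = (\<Sum>l<m. ((\<Sum>j<2 ^ s. W l j * f x' j) - (if l = y x' then 1 else 0))^2)"
      by (simp only: f_prefix y_prefix)
  qed
  ultimately show ?thesis by auto
qed

section \<open>Sign-pattern features\<close>

definition sign_pattern_features ::
    "nat \<Rightarrow> nat \<Rightarrow> (nat \<Rightarrow> nat \<Rightarrow> real) \<Rightarrow> (nat \<Rightarrow> real) \<Rightarrow> nat \<Rightarrow> real"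
  where "sign_pattern_features d k \<beta> x i =
    (if i < k \<and> (\<forall>j<d. sgn (x j) = \<beta> i j) then sqrt (2 ^ d) else 0)"

lemma measurable_sign_pattern_features [measurable]:
  "(\<lambda>\<tau>. sign_pattern_features d k \<beta> (aug s d x \<tau>) i) \<in> borel_measurable (tau_measure s d)"
  unfolding sign_pattern_features_def by measurable

lemma sign_pattern_features_aug:
  assumes "x \<in> cube d" and \<beta>: "\<forall>i<k. \<beta> i \<in> cube d" and box: "\<forall>j\<in>{s..<d}. \<tau> j \<in> {1/2..1}"
  shows "sign_pattern_features d k \<beta> (aug s d x \<tau>) i = (if i < k \<and> x = \<beta> i then sqrt (2 ^ d) else 0)"
proof -
  have "(\<forall>j<d. x j = \<beta> i j) \<longleftrightarrow> x = \<beta> i" if "i < k"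
    using cube_eqI[OF \<open>x \<in> cube d\<close>] \<beta> that by auto
  then show ?thesis
    unfolding sign_pattern_features_def sgn_aug[OF \<open>x \<in> cube d\<close> box] by auto
qed

lemma admissible_sign_pattern_features: "admissible s d k (sign_pattern_features d k \<beta>)"
  unfolding admissible_def
proof (intro ballI allI impI conjI)
  fix x i
  show "integrable (tau_measure s d) (\<lambda>\<tau>. (sign_pattern_features d k \<beta> (aug s d x \<tau>) i)^2)"
    by (rule tau.integrable_const_bound[where B="2 ^ d"]) (auto simp: sign_pattern_features_def)
qed simp

lemma sign_pattern_features_AE:
  assumes "x \<in> cube d" "\<forall>i<k. \<beta> i \<in> cube d"
  shows "AE \<tau> in tau_measure s d.
    \<forall>i<k. sign_pattern_features d k \<beta> (aug s d x \<tau>) i = (if x = \<beta> i then sqrt (2 ^ d) else 0)"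
  using AE_tau_measure_box by eventually_elim (simp add: sign_pattern_features_aug[OF assms])

lemma loss_sign_pattern_features:
  assumes "inj_on \<beta> {..<k}" "\<forall>i<k. \<beta> i \<in> cube d"
  shows "loss s d k lam (sign_pattern_features d k \<beta>) = 0"
proof (rule loss_eq_0_if_AE_determined)
  fix i j assume ij: "i < k" "j < k"
  have "(\<Sum>x\<in>cube d. (if x = \<beta> i then sqrt (2 ^ d) else 0) * (if x = \<beta> j then sqrt (2 ^ d) else 0))
      = (if i = j then sqrt (2 ^ d) * sqrt (2 ^ d) else 0)"
    using assms ij by (auto simp: if_distrib[of "\<lambda>t. t * _"] inj_on_def cong: if_cong)
  then show "(\<Sum>x\<in>cube d. (if x = \<beta> i then sqrt (2 ^ d) else 0) * (if x = \<beta> j then sqrt (2 ^ d) else 0))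
      = (if i = j then 2 ^ d else 0)" by simp
qed (use sign_pattern_features_AE[OF _ assms(2)] in auto)

lemma down_err_sign_pattern_features:
  assumes y_prefix: "\<And>x x'. \<forall>j<s. x j = x' j \<Longrightarrow> y x = y x'" and y_less: "\<And>x. y x < m"
    and \<beta>: "inj_on \<beta> {..<k}" "\<forall>i<k. \<beta> i \<in> cube d"
  shows "down_err s d k m y W (sign_pattern_features d k \<beta>) \<ge> 1 - k / 2 ^ d"
proof -
  define H where "H x = (\<Sum>l<m. ((\<Sum>j<k. W l j * (if x = \<beta> j then sqrt (2 ^ d) else 0))
    - (if l = y x then 1 else 0))^2)" for x
  have err: "down_err s d k m y W (sign_pattern_features d k \<beta>) = (\<Sum>x\<in>cube d. H x) / 2 ^ d"
    unfolding down_err_def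
  proof (rule E_data_cong_AE)
    fix x assume x: "x \<in> cube d"
    have y_aug: "y (aug s d x \<tau>) = y x" for \<tau> by (rule y_prefix) simp
    show "(\<lambda>\<tau>. \<Sum>l<m. ((\<Sum>j<k. W l j * sign_pattern_features d k \<beta> (aug s d x \<tau>) j)
        - (if l = y (aug s d x \<tau>) then 1 else 0))^2) \<in> borel_measurable (tau_measure s d)"
      unfolding y_aug by measurable
    show "AE \<tau> in tau_measure s d. (\<Sum>l<m. ((\<Sum>j<k. W l j * sign_pattern_features d k \<beta> (aug s d x \<tau>) j)
        - (if l = y (aug s d x \<tau>) then 1 else 0))^2) = H x"
      using sign_pattern_features_AE[OF x \<beta>(2)] by eventually_elim (simp add: y_aug H_def)
  qed
  have "(\<Sum>x\<in>cube d - \<beta> ` {..<k}. H x) \<le> (\<Sum>x\<in>cube d. H x)"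
    by (intro sum_mono2) (auto simp: H_def intro: sum_nonneg)
  moreover have "H x = 1" if x: "x \<notin> \<beta> ` {..<k}" for x
  proof -
    have "x \<noteq> \<beta> j" if "j < k" for j using x that by auto
    then have "H x = (\<Sum>l<m. if l = y x then 1 else 0)"
      unfolding H_def by (intro sum.cong) auto
    with y_less show ?thesis by simp
  qed
  moreover have "k \<le> 2 ^ d"
    using card_mono[of "cube d" "\<beta> ` {..<k}"] \<beta> by (auto simp: card_image card_cube)
  moreover have "(\<Sum>x\<in>cube d - \<beta> ` {..<k}. H x) = card (cube d - \<beta> ` {..<k})"
    using calculation(2) by simp
  ultimately have "2 ^ d - real k \<le> (\<Sum>x\<in>cube d. H x)"
    using \<beta> by (simp add: card_Diff_subset card_image image_subset_iff card_cube of_nat_diff)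
  then have "(2 ^ d - real k) / 2 ^ d \<le> (\<Sum>x\<in>cube d. H x) / 2 ^ d"
    by (rule divide_right_mono) simp
  then show ?thesis unfolding err by (simp add: diff_divide_distrib)
qed

lemma ex_admissible_minimiser_with_down_err_ge_half:
  assumes "2 * k \<le> 2 ^ d" "lam \<ge> 0"
    and y_prefix: "\<And>x x'. \<forall>j<s. x j = x' j \<Longrightarrow> y x = y x'" and y_less: "\<And>x. y x < m"
  shows "\<exists>f. admissible s d k f \<and> (\<forall>g. admissible s d k g \<longrightarrow> loss s d k lam f \<le> loss s d k lam g)
    \<and> (\<forall>W. down_err s d k m y W f \<ge> 1 / 2)"
proof -
  obtain \<beta> where \<beta>: "inj_on \<beta> {..<k}" "\<forall>i<k. \<beta> i \<in> cube d"
    using assms(1) card_le_inj[of "{..<k}" "cube d"] by (auto simp: card_cube)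
  have "real (2 * k) \<le> 2 ^ d"
    using of_nat_mono[OF assms(1)] by simp
  then have half: "1 / 2 \<le> 1 - real k / 2 ^ d"
    by (simp add: field_simps)
  have "down_err s d k m y W (sign_pattern_features d k \<beta>) \<ge> 1 / 2" for W
    using order.trans[OF half down_err_sign_pattern_features[OF y_prefix y_less \<beta>]] .
  moreover have "loss s d k lam (sign_pattern_features d k \<beta>) \<le> loss s d k lam g" for g
    using loss_sign_pattern_features[OF \<beta>] loss_nonneg[OF \<open>lam \<ge> 0\<close>] by simp
  ultimately show ?thesis
    using admissible_sign_pattern_features by blast
qed

theorem theorem5:
  fixes s d m :: nat and lam :: real and y :: "(nat \<Rightarrow> real) \<Rightarrow> nat"
  assumes "1 \<le> s" and "s \<le> d" and "lam > 0"
    and "\<And>x. y x < m"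
    and "\<And>x x'. (\<forall>j<s. x j = x' j) \<Longrightarrow> y x = y x'"
  shows
    "(\<forall>f\<in>F_relu d (2^s). (\<forall>g\<in>F_relu d (2^s). loss s d (2^s) lam f \<le> loss s d (2^s) lam g) \<longrightarrow>
        (\<exists>W. down_err s d (2^s) m y W f = 0))
     \<and> (\<forall>k. k \<le> 2^(d-s) \<longrightarrow>
        (\<exists>f'. admissible s d k f' \<and> (\<forall>g. admissible s d k g \<longrightarrow> loss s d k lam f' \<le> loss s d k lam g)
              \<and> (\<forall>W. down_err s d k m y W f' \<ge> 1/2)))"
proof (intro conjI ballI impI allI)
  fix f assume "f \<in> F_relu d (2 ^ s)"
    and min: "\<forall>g\<in>F_relu d (2 ^ s). loss s d (2 ^ s) lam f \<le> loss s d (2 ^ s) lam g"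
  then obtain U b where f: "f = relu_net d (2 ^ s) U b" unfolding F_relu_def by blast
  have "loss s d (2 ^ s) lam f = 0"
    using ex_relu_net_loss_eq_0[OF \<open>s \<le> d\<close>] min loss_nonneg[of lam] \<open>lam > 0\<close>
    by (metis antisym less_imp_le)
  then show "\<exists>W. down_err s d (2 ^ s) m y W f = 0"
    using relu_net_loss_eq_0_imp_prefix_invariant[OF \<open>s \<le> d\<close> \<open>lam > 0\<close>] assms(5)
    by (intro prefix_invariant_features_linear_probe[OF \<open>s \<le> d\<close>])
      (auto simp: f loss_eq_0_iff[OF \<open>lam > 0\<close>] relu_net_def)
next
  fix k :: nat assume "k \<le> 2 ^ (d - s)"
  moreover have "2 \<le> (2::nat) ^ s"
    using power_increasing[OF \<open>1 \<le> s\<close>, of "2::nat"] by simp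
  ultimately have "2 * k \<le> 2 ^ s * 2 ^ (d - s)"
    by (simp add: mult_le_mono)
  then have "2 * k \<le> 2 ^ d"
    using \<open>s \<le> d\<close> by (simp flip: power_add)
  with \<open>lam > 0\<close> assms(4,5) show "\<exists>f'. admissible s d k f'
      \<and> (\<forall>g. admissible s d k g \<longrightarrow> loss s d k lam f' \<le> loss s d k lam g)
      \<and> (\<forall>W. down_err s d k m y W f' \<ge> 1 / 2)"
    by (intro ex_admissible_minimiser_with_down_err_ge_half) auto
qed

end
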